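(* $\mathcal{M}_7=\{1,2,6,7,14,294,12642\}$ and $\mathcal{M}_{43}=\{1,2,6,42,43,86,258,77658\}$.
   Context: For positive integers $k,n$ let $S_k(n)=\sum_{i=1}^{n} i^k$. For an integer $a$, $\mathcal{M}_a$ denotes the set of positive integers $n$ such that $S_n(n)\equiv a\pmod{n}$. *)

theory Defs
  imports Main
begin

definition S :: "nat \<Rightarrow> nat \<Rightarrow> int" where
  "S k n = (\<Sum>i=1..n. (int i) ^ k)"

definition M :: "int \<Rightarrow> nat set" where
  "M a = {n. n > 0 \<and> S n n mod int n = a mod int n}"

end

theory Submission
  imports Defs "HOL-Number_Theory.Number_Theory"
begin

text \<open>Let \<open>q^e\<close> be a prime power dividing \<open>n\<close>. Splitting \<open>S\<^sub>n(n)\<close> into blocks of length \<open>q^e\<close>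
  gives \<open>S\<^sub>n(n) \<equiv> (n / q^e) (0^n + 1^n + \<dots> + (q^e - 1)^n)\<close>, and the block sum is \<open>\<equiv> \<phi>(q^e)\<close> if \<open>q - 1 | n\<close>
  (Euler) and \<open>\<equiv> 0\<close> otherwise (multiply by a primitive root). Hence \<open>S\<^sub>n(n) \<equiv> -n/q\<close> or
  \<open>\<equiv> 0 (mod q^e)\<close>, and \<open>n \<in> M\<^sub>a\<close> becomes a condition at each prime power of \<open>n\<close>.
  For a prime \<open>a = p\<close> these conditions force \<open>q - 1 | n\<close> for every prime \<open>q \<noteq> p\<close> dividing \<open>n\<close>, and
  exponents at most 1 (at most 2 at \<open>p\<close>). So \<open>n\<close> divides every \<open>N\<close> with \<open>p\<^sup>2 | N\<close> that is closed under
  \<open>d | N \<and> d + 1 prime \<Longrightarrow> d + 1 | N\<close>, e.g. \<open>N = 2\<cdot>3\<cdot>7\<^sup>2\<cdot>43\<close> for \<open>p = 7\<close> and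
  \<open>N = 2\<cdot>3\<cdot>7\<cdot>43\<^sup>2\<cdot>77659\<close> for \<open>p = 43\<close>, and it remains to check the conditions on the divisors
  of \<open>N\<close>.\<close>

lemma sum_powers_lessThan_mult_cong:
  fixes d j k :: nat
  shows "[(\<Sum>i<j*d. i^k) = j * (\<Sum>i<d. i^k)] (mod d)"
proof -
  have "(\<Sum>i<j*d. i^k) = (\<Sum>m<j. \<Sum>i\<in>{m*d..<m*d+d}. i^k)"
    by (simp add: sum.nat_group)
  also have "\<dots> = (\<Sum>m<j. \<Sum>i<d. (i + m*d)^k)"
  proof (rule sum.cong[OF refl])
    fix m
    have "{m*d..<m*d+d} = {0+m*d..<d+m*d}" by (simp add: add.commute)
    then show "(\<Sum>i\<in>{m*d..<m*d+d}. i^k) = (\<Sum>i<d. (i + m*d)^k)"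
      by (simp only: sum.shift_bounds_nat_ivl atLeast0LessThan)
  qed
  also have "[(\<Sum>m<j. \<Sum>i<d. (i + m*d)^k) = (\<Sum>m<j. \<Sum>i<d. i^k)] (mod d)"
    by (intro cong_sum cong_pow) (simp add: cong_def)
  finally show ?thesis by simp
qed

lemma S_self_cong_block_sum:
  assumes "0 < n" "d dvd n"
  shows "[S n n = int (n div d * (\<Sum>r<d. r^n))] (mod int d)"
proof -
  have "(\<Sum>i=1..n. i^n) = (\<Sum>i<n. i^n) + n^n"
    using assms(1) by (metis One_nat_def atMost_atLeast0 lessThan_Suc_atMost sum.lessThan_Suc
        sum_shift_lb_Suc0_0 zero_power)
  also have "[\<dots> = (\<Sum>i<n div d * d. i^n) + 0] (mod d)"
    using assms dvd_trans[OF _ dvd_power[of n n]] by (intro cong_add) (auto simp: cong_0_iff)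
  also have "[(\<Sum>i<n div d * d. i^n) + 0 = n div d * (\<Sum>r<d. r^n)] (mod d)"
    using sum_powers_lessThan_mult_cong by simp
  finally show ?thesis
    by (simp add: S_def cong_int_iff[symmetric])
qed

lemma sum_powers_prime_power_cong_totient:
  fixes q e n :: nat
  assumes q: "prime q" and e: "0 < e" and "q^e dvd n" and "0 < n" and "(q - 1) dvd n"
  shows "[(\<Sum>r<q^e. r^n) = totient (q^e)] (mod q^e)"
proof -
  have q1: "1 < q" using q prime_gt_1_nat by blast
  have "e < 2^e" by (rule less_exp)
  also have "2^e \<le> q^e" using q1 by (intro power_mono) auto
  also have "q^e \<le> n" using assms(3,4) by (rule dvd_imp_le)
  finally have e_le_n: "e \<le> n" by simp
  have "q^(e-1) dvd n" using dvd_trans[OF le_imp_power_dvd[of "e-1" e q] assms(3)] by simp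
  moreover have "coprime q (q - 1)"
    by (rule coprime_diff_one_right_nat) (use q1 in simp)
  then have "coprime (q^(e-1)) (q-1)"
    by (simp add: coprime_power_left_iff)
  ultimately have totient_dvd: "totient (q^e) dvd n"
    unfolding totient_prime_power[OF q e] using divides_mult assms(5) by blast
  have power_cong: "[r^n = (if coprime r (q^e) then 1 else 0)] (mod q^e)" for r
  proof (cases "coprime r (q^e)")
    case True
    from totient_dvd obtain k where k: "n = totient (q^e) * k" by (elim dvdE)
    have "[(r ^ totient (q^e))^k = 1^k] (mod q^e)"
      by (intro cong_pow euler_theorem True)
    then show ?thesis using True k by (simp add: power_mult)
  next
    case False
    then have "\<not> coprime r q" using e by (simp add: coprime_power_right_iff)
    then have "q dvd r" using prime_imp_coprime[OF q] by (metis coprime_commute)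
    then have "q^e dvd r^e" by (rule dvd_power_same)
    also have "r^e dvd r^n" using e_le_n by (rule le_imp_power_dvd)
    finally have "q^e dvd r^n" .
    then show ?thesis using False by (simp add: cong_0_iff)
  qed
  have "[(\<Sum>r<q^e. r^n) = (\<Sum>r<q^e. if coprime r (q^e) then 1 else 0)] (mod q^e)"
    by (intro cong_sum power_cong)
  also have "(\<Sum>r<q^e. if coprime r (q^e) then 1 else 0) = card {r\<in>{..<q^e}. coprime r (q^e)}"
    by (simp add: sum.If_cases Int_def conj_commute)
  also have "{r\<in>{..<q^e}. coprime r (q^e)} = totatives (q^e)"
  proof -
    have "\<not> coprime 0 q" "\<not> coprime (q^e) q"
      using q1 e by simp_all
    then show ?thesis
      using q1 by (auto simp: totatives_def; metis gr0I le_neq_implies_less)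
  qed
  finally show ?thesis by (simp add: totient_def)
qed

text \<open>Multiplication by a primitive root \<open>g\<close> modulo \<open>q\<close> permutes the residues modulo \<open>q^e\<close>, so
  the power sum \<open>T\<close> satisfies \<open>g^n T \<equiv> T\<close>, while \<open>g^n - 1\<close> is a unit modulo \<open>q\<close>.\<close>

lemma prime_power_dvd_sum_powers:
  fixes q e n :: nat
  assumes q: "prime q" and e: "0 < e" and not_dvd: "\<not> (q - 1) dvd n"
  shows "q^e dvd (\<Sum>r<q^e. r^n)"
proof -
  define Q where "Q = q^e"
  define T where "T = (\<Sum>r<Q. r^n)"
  have q1: "1 < q" using q prime_gt_1_nat by blast
  obtain g where g: "residue_primroot q g" using prime_primitive_root_exists[OF q1 q] by blast
  have ord_g: "ord q g = q - 1" and coprime_qg: "coprime q g"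
    using g q by (auto simp: residue_primroot_def totient_prime)
  have coprime_gQ: "coprime g Q"
    using coprime_qg e by (simp add: Q_def coprime_power_right_iff coprime_commute)
  have inj: "inj_on (\<lambda>r. g * r mod Q) {..<Q}"
  proof (rule inj_onI)
    fix r s assume "r \<in> {..<Q}" "s \<in> {..<Q}" "g * r mod Q = g * s mod Q"
    then have "[r = s] (mod Q)"
      using cong_mult_lcancel_nat[OF coprime_gQ] by (simp add: cong_def)
    then show "r = s"
      using \<open>r \<in> {..<Q}\<close> \<open>s \<in> {..<Q}\<close> cong_less_modulus_unique_nat by auto
  qed
  have "(\<lambda>r. g * r mod Q) ` {..<Q} \<subseteq> {..<Q}"
    using q1 by (auto simp: Q_def)
  then have bij: "bij_betw (\<lambda>r. g * r mod Q) {..<Q} {..<Q}"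
    using endo_inj_surj[OF _ _ inj] inj by (simp add: bij_betw_def)
  have "T = (\<Sum>r<Q. (g * r mod Q)^n)"
    unfolding T_def using sum.reindex_bij_betw[OF bij, of "\<lambda>r. r^n"] by simp
  also have "[\<dots> = (\<Sum>r<Q. (g * r)^n)] (mod Q)"
    by (intro cong_sum cong_pow) (simp add: cong_def)
  also have "(\<Sum>r<Q. (g * r)^n) = g^n * T"
    by (simp add: T_def power_mult_distrib sum_distrib_left)
  finally have "[g^n * T = T] (mod Q)" by (simp add: cong_sym)
  moreover have "1 \<le> g^n"
    using coprime_qg q1 by (cases "g = 0") (auto simp: Suc_le_eq)
  ultimately have "Q dvd g^n * T - T"
    by (simp add: cong_altdef_nat)
  then have "Q dvd (g^n - 1) * T"
    by (simp add: diff_mult_distrib)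
  moreover have "\<not> [g^n = 1] (mod q)"
    using ord_g not_dvd by (simp add: ord_divides')
  then have "\<not> q dvd g^n - 1"
    using \<open>1 \<le> g^n\<close> by (simp add: cong_altdef_nat)
  then have "coprime q (g^n - 1)"
    by (rule prime_imp_coprime[OF q])
  then have "coprime Q (g^n - 1)"
    using e by (simp add: Q_def coprime_power_left_iff)
  ultimately have "Q dvd T"
    using coprime_dvd_mult_right_iff[of Q "g^n - 1" T] by (simp add: mult.commute)
  then show ?thesis by (simp add: Q_def T_def)
qed

lemma S_self_cong_prime_power:
  fixes q e n :: nat
  assumes q: "prime q" and e: "0 < e" and "q^e dvd n" and "0 < n"
  shows "[S n n = (if (q - 1) dvd n then - int (n div q) else 0)] (mod int (q^e))"
proof -
  define Q where "Q = q^e"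
  define k where "k = n div Q"
  have n_eq: "n = k * Q" using assms(3) by (simp add: k_def Q_def)
  have block: "[S n n = int (k * (\<Sum>r<Q. r^n))] (mod int Q)"
    using S_self_cong_block_sum[OF assms(4,3)] by (simp add: k_def Q_def)
  show ?thesis
  proof (cases "(q - 1) dvd n")
    case True
    obtain e' where e': "e = Suc e'" using e by (cases e) auto
    obtain q' where q': "q = Suc q'" using prime_gt_0_nat[OF q] by (cases q) auto
    have units: "[int (k * (\<Sum>r<Q. r^n)) = int (k * totient Q)] (mod int Q)"
      unfolding cong_int_iff Q_def
      using sum_powers_prime_power_cong_totient[OF q e assms(3,4) True] by (rule cong_mult[OF cong_refl])
    have "totient Q = q^e' * (q - 1)"
      using totient_prime_power_Suc[OF q] by (simp add: Q_def e')
    moreover have "n div q = k * q^e'"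
      using n_eq prime_gt_0_nat[OF q] by (simp add: Q_def e')
    ultimately have "k * totient Q + n div q = k * Q"
      by (simp add: Q_def e' q' algebra_simps)
    then have "int (k * totient Q + n div q) = int (k * Q)"
      by (rule arg_cong)
    then have "int (k * totient Q) - - int (n div q) = int k * int Q"
      by simp
    then have "[int (k * totient Q) = - int (n div q)] (mod int Q)"
      by (simp add: cong_iff_dvd_diff)
    with block units have "[S n n = - int (n div q)] (mod int Q)"
      by (blast intro: cong_trans)
    with True show ?thesis by (simp add: Q_def)
  next
    case False
    have "Q dvd k * (\<Sum>r<Q. r^n)"
      using prime_power_dvd_sum_powers[OF q e False] by (simp add: Q_def)
    then have "[int (k * (\<Sum>r<Q. r^n)) = 0] (mod int Q)"
      by (simp only: cong_0_iff of_nat_dvd_iff)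
    with block have "[S n n = 0] (mod int Q)"
      by (rule cong_trans)
    with False show ?thesis by (simp add: Q_def)
  qed
qed

lemma M_iff_dvd: "n \<in> M a \<longleftrightarrow> 0 < n \<and> int n dvd S n n - a"
  by (simp add: M_def mod_eq_dvd_iff)

text \<open>The condition that a prime power \<open>q^e\<close> dividing \<open>n\<close> imposes on \<open>n \<in> M a\<close>, by
  \<open>S_self_cong_prime_power\<close>. It is phrased with \<open>if\<close> so that the simplifier decides \<open>q^e dvd n\<close>
  before evaluating the rest.\<close>

definition prime_power_condition :: "int \<Rightarrow> nat \<Rightarrow> nat \<Rightarrow> nat \<Rightarrow> bool" where
  "prime_power_condition a n q e \<longleftrightarrow>
     (if q^e dvd n then int (q^e) dvd a + (if (q - 1) dvd n then int (n div q) else 0) else True)"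

lemma prime_power_dvd_S_self_diff_iff:
  fixes q e n :: nat
  assumes "prime q" "0 < e" "q^e dvd n" "0 < n"
  shows "int (q^e) dvd S n n - a \<longleftrightarrow>
    int (q^e) dvd a + (if (q - 1) dvd n then int (n div q) else 0)"
proof -
  define c where "c = (if (q - 1) dvd n then - int (n div q) else 0)"
  have "int (q^e) dvd S n n - c"
    using S_self_cong_prime_power[OF assms] by (simp add: c_def cong_iff_dvd_diff)
  then have "int (q^e) dvd S n n - a \<longleftrightarrow> int (q^e) dvd c - a"
    using dvd_add_right_iff[of "int (q^e)" "S n n - c" "c - a"] by simp
  also have "c - a = - (a + (if (q - 1) dvd n then int (n div q) else 0))"
    by (simp add: c_def)
  finally show ?thesis by (simp only: dvd_minus_iff)
qed

lemma M_imp_prime_power_condition: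
  assumes "n \<in> M a" "prime q" "0 < e"
  shows "prime_power_condition a n q e"
proof -
  have "int (q^e) dvd a + (if (q - 1) dvd n then int (n div q) else 0)" if "q^e dvd n"
  proof -
    have "0 < n" and "int n dvd S n n - a"
      using assms(1) by (simp_all add: M_iff_dvd)
    then have "int (q^e) dvd S n n - a"
      using that dvd_trans of_nat_dvd_iff by blast
    then show ?thesis
      using prime_power_dvd_S_self_diff_iff[OF assms(2,3) that \<open>0 < n\<close>] by simp
  qed
  then show ?thesis by (simp add: prime_power_condition_def)
qed

lemma dvd_if_prime_power_dvd:
  fixes x y :: "'a :: factorial_semiring"
  assumes "x \<noteq> 0" and prime_power_dvd: "\<And>p k. prime p \<Longrightarrow> p ^ k dvd x \<Longrightarrow> p ^ k dvd y"
  shows "x dvd y"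
proof (cases "y = 0")
  case False
  show ?thesis
  proof (rule multiplicity_le_imp_dvd[OF \<open>x \<noteq> 0\<close>])
    fix p :: 'a assume "prime p"
    then have "p ^ multiplicity p x dvd y"
      by (intro prime_power_dvd multiplicity_dvd)
    then show "multiplicity p x \<le> multiplicity p y"
      using power_dvd_iff_le_multiplicity[OF False] \<open>prime p\<close> not_prime_unit by blast
  qed
qed simp

lemma M_iff_prime_power_conditions:
  fixes n N E :: nat
  assumes "n dvd N" "0 < N" and exponent_bound: "\<And>q. q \<in> prime_factors N \<Longrightarrow> \<not> q ^ Suc E dvd N"
  shows "n \<in> M a \<longleftrightarrow> (\<forall>q\<in>prime_factors N. \<forall>e\<in>{1..E}. prime_power_condition a n q e)"
proof
  assume "n \<in> M a"
  then show "\<forall>q\<in>prime_factors N. \<forall>e\<in>{1..E}. prime_power_condition a n q e"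
    by (auto intro: M_imp_prime_power_condition)
next
  assume conditions: "\<forall>q\<in>prime_factors N. \<forall>e\<in>{1..E}. prime_power_condition a n q e"
  have "0 < n" using assms(1,2) by (auto intro: Nat.gr0I)
  have "n dvd nat \<bar>S n n - a\<bar>"
  proof (rule dvd_if_prime_power_dvd)
    show "n \<noteq> 0" using \<open>0 < n\<close> by simp
    fix q k :: nat assume "prime q" and qk: "q ^ k dvd n"
    show "q ^ k dvd nat \<bar>S n n - a\<bar>"
    proof (cases "k = 0")
      case False
      have "q ^ k dvd N" using qk assms(1) by (rule dvd_trans)
      then have "q \<in> prime_factors N"
        using \<open>prime q\<close> False assms(2) by (auto simp: in_prime_factors_iff intro: dvd_trans[OF dvd_power])
      moreover have "k \<le> E"
      proof (rule ccontr)
        assume "\<not> k \<le> E"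
        then have "q ^ Suc E dvd N"
          using \<open>q ^ k dvd N\<close> by (meson dvd_trans le_imp_power_dvd not_less_eq_eq)
        then show False using exponent_bound \<open>q \<in> prime_factors N\<close> by blast
      qed
      ultimately have "prime_power_condition a n q k"
        using conditions False by auto
      then have "int (q ^ k) dvd S n n - a"
        using prime_power_dvd_S_self_diff_iff[OF \<open>prime q\<close> _ qk \<open>0 < n\<close>] False qk
        by (simp add: prime_power_condition_def)
      then show ?thesis by simp
    qed simp
  qed
  then show "n \<in> M a" using \<open>0 < n\<close> by (simp add: M_iff_dvd)
qed

lemma M_imp_prime_power_dvd:
  assumes "n \<in> M a" "prime q" "q ^ Suc e dvd n"
  shows "int (q ^ e) dvd a"
proof -
  let ?b = "if (q - 1) dvd n then int (n div q) else 0"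
  have "int (q ^ Suc e) dvd a + ?b"
    using M_imp_prime_power_condition[OF assms(1,2), of "Suc e"] assms(3)
    by (simp add: prime_power_condition_def)
  moreover have "int (q ^ e) dvd int (q ^ Suc e)"
    by (simp only: of_nat_dvd_iff) (simp add: le_imp_power_dvd)
  ultimately have "int (q ^ e) dvd a + ?b" by (rule dvd_trans[rotated])
  moreover obtain c where "n = q ^ Suc e * c" using assms(3) by (elim dvdE)
  then have "n div q = q ^ e * c" using prime_gt_0_nat[OF assms(2)] by simp
  then have "int (q ^ e) dvd ?b" by simp
  ultimately show ?thesis by (simp only: dvd_add_left_iff)
qed

lemma M_imp_pred_dvd:
  assumes "n \<in> M a" "prime q" "q dvd n" "\<not> int q dvd a"
  shows "(q - 1) dvd n"
  using M_imp_prime_power_condition[OF assms(1,2), of 1] assms(3,4)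
  by (auto simp: prime_power_condition_def split: if_splits)

lemma M_prime_exponent_bound:
  fixes p r k n :: nat
  assumes p: "prime p" and "n \<in> M (int p)" and r: "prime r" and "r ^ k dvd n"
  shows "k \<le> 1 \<or> (r = p \<and> k = 2)"
proof (cases "k \<le> 1")
  case False
  then obtain j where k: "k = Suc j" and "0 < j" by (cases k) auto
  have "int (r ^ j) dvd int p"
    using M_imp_prime_power_dvd assms(2-4) k by blast
  then have "r ^ j dvd p" by (simp only: of_nat_dvd_iff)
  moreover have "r ^ j \<noteq> 1"
    using \<open>0 < j\<close> prime_gt_1_nat[OF r] by simp
  ultimately have "r ^ j = p" using p by (auto simp: prime_nat_iff)
  then have "prime (r ^ j)" using p by simp
  then have "j = 1" by (simp add: prime_power_iff)
  then show ?thesis using \<open>r ^ j = p\<close> k by simp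
qed simp

lemma M_prime_dvd_if_closed:
  fixes p n N :: nat
  assumes p: "prime p" and n: "n \<in> M (int p)" and "p^2 dvd N"
    and closed: "\<And>d. d dvd N \<Longrightarrow> prime (d + 1) \<Longrightarrow> d + 1 dvd N"
  shows "n dvd N"
proof -
  have "p dvd N" using \<open>p^2 dvd N\<close> by (simp add: power2_eq_square dvd_mult_left)
  have dvd_N: "m dvd N"
    if "m dvd n" "m \<noteq> 0" and prime_dvd_N: "\<And>r. prime r \<Longrightarrow> r dvd m \<Longrightarrow> r dvd N" for m
  proof (rule dvd_if_prime_power_dvd[OF \<open>m \<noteq> 0\<close>])
    fix r k :: nat assume r: "prime r" and "r ^ k dvd m"
    show "r ^ k dvd N"
    proof (cases "k = 0")
      case False
      then have "r dvd m"
        using \<open>r ^ k dvd m\<close> dvd_trans[OF dvd_power[of k r]] by auto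
      then have "r dvd N" by (rule prime_dvd_N[OF r])
      have "k \<le> 1 \<or> (r = p \<and> k = 2)"
        using M_prime_exponent_bound[OF p n r dvd_trans[OF \<open>r ^ k dvd m\<close> \<open>m dvd n\<close>]] .
      then consider "k = 1" | "r = p" "k = 2" using False by linarith
      then show ?thesis using \<open>r dvd N\<close> \<open>p^2 dvd N\<close> by cases simp_all
    qed simp
  qed
  \<comment> \<open>a prime \<open>q \<noteq> p\<close> dividing \<open>n\<close> has \<open>q - 1 | n\<close>, whose prime factors are smaller such primes\<close>
  have "q dvd N" if "prime q" "q dvd n" for q
    using that
  proof (induction q rule: less_induct)
    case (less q)
    show ?case
    proof (cases "q = p")
      case False
      then have "\<not> int q dvd int p"
        using less.prems(1) p primes_dvd_imp_eq by (simp only: of_nat_dvd_iff) blast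
      then have "(q - 1) dvd n" using M_imp_pred_dvd[OF n less.prems] by blast
      moreover have "q - 1 \<noteq> 0" using prime_gt_1_nat[OF less.prems(1)] by simp
      moreover have "r dvd N" if "prime r" "r dvd q - 1" for r
      proof -
        have "r \<le> q - 1" using \<open>r dvd q - 1\<close> \<open>q - 1 \<noteq> 0\<close> by (simp add: dvd_imp_le)
        then have "r < q" using \<open>q - 1 \<noteq> 0\<close> by linarith
        then show ?thesis
          using less.IH \<open>prime r\<close> dvd_trans[OF \<open>r dvd q - 1\<close> \<open>(q - 1) dvd n\<close>] by blast
      qed
      ultimately have "(q - 1) dvd N" by (rule dvd_N)
      then show ?thesis
        using closed[of "q - 1"] less.prems(1) prime_gt_0_nat by simp
    qed (use \<open>p dvd N\<close> in simp)
  qed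
  then show ?thesis using dvd_N[of n] n by (simp add: M_def)
qed

lemma M_prime_eqI:
  fixes p N :: nat and A :: "nat set"
  assumes p: "prime p" and "0 < N" "p^2 dvd N"
    and closed: "\<forall>d\<in>{d. d dvd N}. prime (d + 1) \<longrightarrow> d + 1 dvd N"
    and cube_free: "\<forall>q\<in>prime_factors N. \<not> q ^ 3 dvd N"
    and conditions: "\<forall>d\<in>{d. d dvd N}.
      (\<forall>q\<in>prime_factors N. \<forall>e\<in>{1, 2}. prime_power_condition (int p) d q e) \<longleftrightarrow> d \<in> A"
    and "A \<subseteq> {d. d dvd N}"
  shows "M (int p) = A"
proof -
  have "{1..2::nat} = {1, 2}" by auto
  then have "n \<in> M (int p) \<longleftrightarrow> n \<in> A" if "n dvd N" for n
    using M_iff_prime_power_conditions[OF that \<open>0 < N\<close>, of 2] cube_free conditions that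
    by (simp add: numeral_3_eq_3)
  moreover have "n dvd N" if "n \<in> M (int p)" for n
    using M_prime_dvd_if_closed[OF p that \<open>p^2 dvd N\<close>] closed by blast
  ultimately show ?thesis
    using \<open>A \<subseteq> {d. d dvd N}\<close> by blast
qed

lemma divisors_prime_mult:
  fixes p m :: nat
  assumes "prime p"
  shows "{d. d dvd p * m} = {d. d dvd m} \<union> (\<lambda>d. p * d) ` {d. d dvd m}"
proof (intro equalityI subsetI)
  fix d assume "d \<in> {d. d dvd p * m}"
  then obtain b c where "d = b * c" "b dvd p" "c dvd m" by (auto dest: division_decomp)
  moreover have "b = 1 \<or> b = p" using \<open>b dvd p\<close> assms by (simp add: prime_nat_iff)
  ultimately show "d \<in> {d. d dvd m} \<union> (\<lambda>d. p * d) ` {d. d dvd m}" by auto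
qed (auto intro: dvd_mult dvd_mult2 mult_dvd_mono)

text \<open>For \<open>simp only\<close> on a number written as an unevaluated product of primes; the full simplifier
  would multiply the numerals out before these rules apply.\<close>

lemmas divisors_of_product_simps =
  divisors_prime_mult nat_dvd_1_iff_1 singleton_conv image_insert image_empty Un_insert_left Un_empty_left

lemmas prime_factors_of_product_simps =
  prime_factors_product prime_prime_factors prime_factorization_1 set_mset_empty
  mult_eq_0_iff numeral_neq_zero one_neq_zero simp_thms

lemma prime_77659: "prime (77659::nat)"
proof (rule lucas[where a = 2])
  have "(77658::nat) = 2 * (3 * (7 * (43 * (43 * 1))))" by simp
  moreover have "prime (2::nat)" "prime (3::nat)" "prime (7::nat)" "prime (43::nat)" by simp_all
  ultimately have prime_factors: "prime_factors (77658::nat) = {2, 3, 7, 43}"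
    by (simp only: prime_factors_of_product_simps) auto
  show "\<forall>p. prime p \<and> p dvd 77659 - 1 \<longrightarrow> [2 ^ ((77659 - 1) div p) \<noteq> 1] (mod (77659::nat))"
  proof (intro allI impI)
    fix p :: nat assume "prime p \<and> p dvd 77659 - 1"
    then have "p \<in> {2, 3, 7, 43}"
      by (simp add: prime_factors[symmetric] in_prime_factors_iff)
    then show "[2 ^ ((77659 - 1) div p) \<noteq> 1] (mod (77659::nat))"
      by (simp only: cong_power_nat_code) auto
  qed
qed (simp, simp only: cong_power_nat_code, simp)

lemma M_7: "M 7 = {1, 2, 6, 7, 14, 294, 12642}"
proof -
  have N: "(12642::nat) = 2 * (3 * (7 * (7 * (43 * 1))))" by simp
  have primes: "prime (2::nat)" "prime (3::nat)" "prime (7::nat)" "prime (43::nat)"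
    by simp_all
  have prime_factors: "prime_factors (12642::nat) = {2, 3, 7, 43}"
    unfolding N by (simp only: prime_factors_of_product_simps primes) auto
  have "M (int 7) = {1, 2, 6, 7, 14, 294, 12642}"
  proof (rule M_prime_eqI[where N = 12642])
    have "\<forall>d\<in>{d. d dvd (12642::nat)}.
        d + 1 dvd 12642 \<or> (\<exists>k\<in>{2, 3, 5, 7, 13, 47}. k \<noteq> 1 \<and> k < d + 1 \<and> k dvd d + 1)"
      \<comment> \<open>\<open>One_nat_def\<close> would turn \<open>1 + 1\<close> into \<open>Suc (Suc 0)\<close>, which is not evaluated\<close>
      unfolding N by (simp only: divisors_of_product_simps primes) (simp del: One_nat_def)
    then show "\<forall>d\<in>{d. d dvd 12642}. prime (d + 1) \<longrightarrow> d + 1 dvd (12642::nat)"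
      using prime_nat_not_dvd by blast
    show "\<forall>d\<in>{d. d dvd (12642::nat)}.
        (\<forall>q\<in>prime_factors 12642. \<forall>e\<in>{1, 2}. prime_power_condition (int 7) d q e) \<longleftrightarrow>
        d \<in> {1, 2, 6, 7, 14, 294, 12642}"
      unfolding prime_factors unfolding N
      by (simp only: divisors_of_product_simps primes) (simp add: prime_power_condition_def)
  qed (simp_all add: prime_factors)
  then show ?thesis by simp
qed

lemma M_43: "M 43 = {1, 2, 6, 42, 43, 86, 258, 77658}"
proof -
  have N: "(6030842622::nat) = 2 * (3 * (7 * (43 * (43 * (77659 * 1)))))" by simp
  have "prime (2::nat)" "prime (3::nat)" "prime (7::nat)" "prime (43::nat)"
    by simp_all
  note primes = this prime_77659
  have prime_factors: "prime_factors (6030842622::nat) = {2, 3, 7, 43, 77659}"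
    unfolding N by (simp only: prime_factors_of_product_simps primes) auto
  have "M (int 43) = {1, 2, 6, 42, 43, 86, 258, 77658}"
  proof (rule M_prime_eqI[where N = 6030842622])
    have "\<forall>d\<in>{d. d dvd (6030842622::nat)}.
        d + 1 dvd 6030842622 \<or> (\<exists>k\<in>{2, 3, 5, 7, 13, 43}. k \<noteq> 1 \<and> k < d + 1 \<and> k dvd d + 1)"
      unfolding N by (simp only: divisors_of_product_simps primes) (simp del: One_nat_def)
    then show "\<forall>d\<in>{d. d dvd 6030842622}. prime (d + 1) \<longrightarrow> d + 1 dvd (6030842622::nat)"
      using prime_nat_not_dvd by blast
    show "\<forall>d\<in>{d. d dvd (6030842622::nat)}.
        (\<forall>q\<in>prime_factors 6030842622. \<forall>e\<in>{1, 2}. prime_power_condition (int 43) d q e) \<longleftrightarrow>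
        d \<in> {1, 2, 6, 42, 43, 86, 258, 77658}"
      unfolding prime_factors unfolding N
      by (simp only: divisors_of_product_simps primes) (simp add: prime_power_condition_def)
  qed (simp_all add: prime_factors)
  then show ?thesis by simp
qed

theorem mainTheorem9:
  shows "M 7 = {1, 2, 6, 7, 14, 294, 12642} \<and> M 43 = {1, 2, 6, 42, 43, 86, 258, 77658}"
  using M_7 M_43 ..

end
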